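(* Let $(X,\rho,\mu)$ be a $K$-doubling metric measure space, let $x\in X$ with $\mu(\{x\})=0$, let $B$ be a $\mu$-neighborhood of $x$ and let $f\colon B\to[0,+\infty)$ be a Lipschitz function with $f(x)=0$. Then $$\limsup_{y\in B,\ y\to x}\frac{f(y)}{\rho(y,x)}=\mu\text{-}\limsup_{y\in B,\ y\to x}\frac{f(y)}{\rho(y,x)}.$$
   Context: A $K$-doubling metric measure space ($K>0$) is a triple $(X,\rho,\mu)$ where $(X,\rho)$ is a complete separable metric space and $\mu$ is a Borel-regular outer measure on $X$ with $0<\mu(B_{2r}(x))\le K\mu(B_r(x))<+\infty$ for all $x\in X$, $r>0$. A set $E\ni x$ is a $\mu$-neighborhood of $x$ if there is a Borel set $B\subseteq E$ with $\lim_{r\to0^+}\mu(B_r(x)\setminus B)/\mu(B_r(x))=0$. For a real function $g$ on $A\subseteq X$ and a point $x$ such that $A\cap U\setminus\{x\}\neq\emptyset$ for every $\mu$-neighborhood $U$ of $x$, one sets $\mu\text{-}\limsup_{y\in A,\,y\to x}g(y)=\inf_U\sup_{y\in U\cap A\setminus\{x\}}g(y)$, the infimum over all $\mu$-neighborhoods $U$ of $x$. *)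

theory Defs
  imports "HOL-Analysis.Analysis"
begin

definition outer_measure :: "('a set \<Rightarrow> ennreal) \<Rightarrow> bool" where
  "outer_measure \<mu> \<longleftrightarrow> \<mu> {} = 0 \<and> (\<forall>A B. A \<subseteq> B \<longrightarrow> \<mu> A \<le> \<mu> B) \<and>
     (\<forall>A :: nat \<Rightarrow> 'a set. \<mu> (\<Union>i. A i) \<le> (\<Sum>i. \<mu> (A i)))"

definition caratheodory_measurable :: "('a set \<Rightarrow> ennreal) \<Rightarrow> 'a set \<Rightarrow> bool" where
  "caratheodory_measurable \<mu> E \<longleftrightarrow> (\<forall>A. \<mu> A = \<mu> (A \<inter> E) + \<mu> (A - E))"

definition borel_regular_outer_measure :: "('a::topological_space set \<Rightarrow> ennreal) \<Rightarrow> bool" where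
  "borel_regular_outer_measure \<mu> \<longleftrightarrow> outer_measure \<mu> \<and>
     (\<forall>E \<in> sets borel. caratheodory_measurable \<mu> E) \<and>
     (\<forall>A. \<exists>B \<in> sets borel. A \<subseteq> B \<and> \<mu> B = \<mu> A)"

text \<open>K-doubling metric measure space: the metric space is the type 'a,
  complete and separable (polish_space).\<close>
definition doubling_mms :: "real \<Rightarrow> ('a::polish_space set \<Rightarrow> ennreal) \<Rightarrow> bool" where
  "doubling_mms K \<mu> \<longleftrightarrow> K > 0 \<and> borel_regular_outer_measure \<mu> \<and>
     (\<forall>x r. r > 0 \<longrightarrow> 0 < \<mu> (ball x (2 * r)) \<and> \<mu> (ball x (2 * r)) \<le> ennreal K * \<mu> (ball x r)
                      \<and> \<mu> (ball x r) < top)"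

definition mu_nbhd :: "('a::metric_space set \<Rightarrow> ennreal) \<Rightarrow> 'a \<Rightarrow> 'a set \<Rightarrow> bool" where
  "mu_nbhd \<mu> x E \<longleftrightarrow> x \<in> E \<and> (\<exists>B \<in> sets borel. B \<subseteq> E \<and>
     ((\<lambda>r. enn2real (\<mu> (ball x r - B) / \<mu> (ball x r))) \<longlongrightarrow> 0) (at_right 0))"

definition mu_limsup :: "('a::metric_space set \<Rightarrow> ennreal) \<Rightarrow> 'a \<Rightarrow> 'a set \<Rightarrow> ('a \<Rightarrow> real) \<Rightarrow> ereal" where
  "mu_limsup \<mu> x A g = (INF U \<in> {U. mu_nbhd \<mu> x U}. SUP y \<in> U \<inter> A - {x}. ereal (g y))"

end

theory Submission
  imports Defs
begin

text \<open>Metric balls around x are \<open>\<mu>\<close>-neighbourhoods, so the \<open>\<mu>\<close>-limsup is at most the ordinary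
  one. Conversely, every \<open>\<mu>\<close>-neighbourhood U of x contains a set C of density one at x, and by
  the doubling property such a C meets every ball \<open>B(y, \<delta> \<rho>(y,x))\<close> once y is close to x:
  otherwise this ball, whose measure is comparable to that of \<open>B(x, 2 \<rho>(y,x))\<close>, would lie in
  the small set \<open>B(x, 2 \<rho>(y,x)) - C\<close>. For a point z of C in that ball the Lipschitz bound
  makes \<open>f(z)/\<rho>(z,x)\<close> at least \<open>(f(y)/\<rho>(y,x) - L \<delta>)/(1 + \<delta>)\<close>, so large values of the
  quotient near x are almost attained inside U.\<close>

lemma outer_measure_mono:
  assumes "outer_measure \<mu>" "A \<subseteq> B"
  shows "\<mu> A \<le> \<mu> B"
  using assms unfolding outer_measure_def by auto

lemma outer_measure_Un_le:
  assumes "outer_measure \<mu>"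
  shows "\<mu> (S \<union> T) \<le> \<mu> S + \<mu> T"
proof -
  define A where "A = (\<lambda>i::nat. if i = 0 then S else if i = 1 then T else {})"
  have "S \<union> T = (\<Union>i. A i)"
    unfolding A_def by (auto split: if_splits)
  also have "\<mu> \<dots> \<le> (\<Sum>i. \<mu> (A i))"
    using assms unfolding outer_measure_def by blast
  also have "\<dots> = (\<Sum>i\<in>{0,1}. \<mu> (A i))"
    using assms by (intro suminf_finite) (auto simp: A_def outer_measure_def)
  also have "\<dots> = \<mu> S + \<mu> T"
    by (simp add: A_def)
  finally show ?thesis .
qed

lemma doubling_mms_outer_measure: "doubling_mms K \<mu> \<Longrightarrow> outer_measure \<mu>"
  unfolding doubling_mms_def borel_regular_outer_measure_def by blast

lemma doubling_mms_ball_pos: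
  assumes "doubling_mms K \<mu>" "r > 0"
  shows "0 < \<mu> (ball z r)"
proof -
  have "0 < \<mu> (ball z (2 * (r / 2)))"
    using assms(1) half_gt_zero[OF assms(2)] unfolding doubling_mms_def by blast
  then show ?thesis by simp
qed

lemma doubling_mms_ball_less_top:
  assumes "doubling_mms K \<mu>" "r > 0"
  shows "\<mu> (ball z r) < top"
  using assms unfolding doubling_mms_def by blast

lemma doubling_mms_ball_power:
  assumes "doubling_mms K \<mu>" "r > 0"
  shows "\<mu> (ball z (2 ^ k * r)) \<le> ennreal (K ^ k) * \<mu> (ball z r)"
proof (induction k)
  case 0
  then show ?case by simp
next
  case (Suc k)
  have "\<mu> (ball z (2 ^ Suc k * r)) = \<mu> (ball z (2 * (2 ^ k * r)))"
    by (simp add: mult.assoc)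
  also have "\<dots> \<le> ennreal K * \<mu> (ball z (2 ^ k * r))"
    using assms unfolding doubling_mms_def by simp
  also have "\<dots> \<le> ennreal K * (ennreal (K ^ k) * \<mu> (ball z r))"
    by (intro mult_left_mono Suc.IH) simp
  finally show ?case
    using assms unfolding doubling_mms_def by (simp add: ennreal_mult' mult.assoc)
qed

lemma doubling_mms_ball_le_small_ball:
  assumes dm: "doubling_mms K \<mu>" and "0 < \<delta>" "0 < r" "dist y x \<le> r" "3 < 2 ^ k * \<delta>"
  shows "\<mu> (ball x (2 * r)) \<le> ennreal (K ^ k) * \<mu> (ball y (\<delta> * r))"
proof -
  have "ball x (2 * r) \<subseteq> ball y (2 ^ k * (\<delta> * r))"
  proof
    fix z assume "z \<in> ball x (2 * r)"
    then have "dist y z < 3 * r"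
      using dist_triangle[of y z x] assms(4) by (simp add: dist_commute)
    also have "\<dots> < 2 ^ k * (\<delta> * r)"
      using assms(3,5) by (simp add: mult.assoc[symmetric])
    finally show "z \<in> ball y (2 ^ k * (\<delta> * r))" by simp
  qed
  then have "\<mu> (ball x (2 * r)) \<le> \<mu> (ball y (2 ^ k * (\<delta> * r)))"
    by (rule outer_measure_mono[OF doubling_mms_outer_measure[OF dm]])
  also have "\<dots> \<le> ennreal (K ^ k) * \<mu> (ball y (\<delta> * r))"
    using assms(2,3) by (intro doubling_mms_ball_power[OF dm]) simp
  finally show ?thesis .
qed

definition density_point :: "('a::metric_space set \<Rightarrow> ennreal) \<Rightarrow> 'a \<Rightarrow> 'a set \<Rightarrow> bool" where
  "density_point \<mu> x C \<longleftrightarrow>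
     (\<forall>\<epsilon>>0. \<forall>\<^sub>F r in at_right 0. \<mu> (ball x r - C) < ennreal \<epsilon> * \<mu> (ball x r))"

lemma density_point_Int:
  assumes "outer_measure \<mu>" "density_point \<mu> x C" "density_point \<mu> x D"
  shows "density_point \<mu> x (C \<inter> D)"
  unfolding density_point_def
proof (intro allI impI)
  fix \<epsilon> :: real assume "\<epsilon> > 0"
  then have "\<forall>\<^sub>F r in at_right 0.
      \<mu> (ball x r - C) < ennreal (\<epsilon>/2) * \<mu> (ball x r) \<and>
      \<mu> (ball x r - D) < ennreal (\<epsilon>/2) * \<mu> (ball x r)"
    using assms(2,3) unfolding density_point_def by (simp add: eventually_conj)
  then show "\<forall>\<^sub>F r in at_right 0. \<mu> (ball x r - C \<inter> D) < ennreal \<epsilon> * \<mu> (ball x r)"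
  proof eventually_elim
    case (elim r)
    have "\<mu> (ball x r - C \<inter> D) = \<mu> ((ball x r - C) \<union> (ball x r - D))"
      by (rule arg_cong[where f = \<mu>]) blast
    also have "\<dots> \<le> \<mu> (ball x r - C) + \<mu> (ball x r - D)"
      by (rule outer_measure_Un_le[OF assms(1)])
    also have "\<dots> < ennreal (\<epsilon>/2) * \<mu> (ball x r) + ennreal (\<epsilon>/2) * \<mu> (ball x r)"
      using elim by (intro add_strict_mono) auto
    also have "\<dots> = ennreal \<epsilon> * \<mu> (ball x r)"
      using \<open>\<epsilon> > 0\<close> by (simp add: distrib_right[symmetric] ennreal_plus[symmetric] del: ennreal_plus)
    finally show ?case .
  qed
qed

lemma density_point_if_ratio_tendsto_0:
  assumes dm: "doubling_mms K \<mu>"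
    and lim: "((\<lambda>r. enn2real (\<mu> (ball x r - C) / \<mu> (ball x r))) \<longlongrightarrow> 0) (at_right 0)"
  shows "density_point \<mu> x C"
  unfolding density_point_def
proof (intro allI impI)
  fix \<epsilon> :: real assume "\<epsilon> > 0"
  have "\<forall>\<^sub>F r in at_right 0. enn2real (\<mu> (ball x r - C) / \<mu> (ball x r)) < \<epsilon> \<and> r > 0"
    using order_tendstoD(2)[OF lim \<open>\<epsilon> > 0\<close>] eventually_at_right_less by (rule eventually_conj)
  then show "\<forall>\<^sub>F r in at_right 0. \<mu> (ball x r - C) < ennreal \<epsilon> * \<mu> (ball x r)"
  proof eventually_elim
    case (elim r)
    define a where "a = \<mu> (ball x r - C)"
    define m where "m = \<mu> (ball x r)"
    have m: "0 < m" "m < top"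
      unfolding m_def using doubling_mms_ball_pos doubling_mms_ball_less_top dm elim by auto
    have "a \<le> m"
      unfolding a_def m_def by (rule outer_measure_mono[OF doubling_mms_outer_measure[OF dm]]) blast
    then have "a / m \<noteq> top"
      using m by (auto simp: ennreal_divide_eq_top_iff)
    then have "a / m < ennreal \<epsilon>"
      using elim \<open>\<epsilon> > 0\<close> unfolding a_def m_def by (metis ennreal_enn2real ennreal_less_iff enn2real_nonneg top.not_eq_extremum)
    then have "a / m * m < ennreal \<epsilon> * m"
      using m by (rule ennreal_mult_strict_right_mono)
    moreover have "a / m * m = a"
      using m by (simp add: ennreal_divide_times ennreal_mult_divide_eq mult.commute[of a] ennreal_times_divide)
    ultimately show ?case
      unfolding a_def m_def by simp
  qed
qed

lemma mu_nbhd_obtains_density_point: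
  assumes "doubling_mms K \<mu>" "mu_nbhd \<mu> x U"
  obtains C where "C \<subseteq> U" "density_point \<mu> x C"
  using assms density_point_if_ratio_tendsto_0 unfolding mu_nbhd_def by blast

lemma density_point_meets_small_balls:
  assumes dm: "doubling_mms K \<mu>" and dens: "density_point \<mu> x C" and "0 < \<delta>" "\<delta> \<le> 1"
  shows "\<exists>r0>0. \<forall>y. 0 < dist y x \<and> dist y x < r0 \<longrightarrow> (\<exists>z\<in>C. dist y z < \<delta> * dist y x)"
proof -
  obtain k :: nat where "3 / \<delta> < 2 ^ k"
    using real_arch_pow[of 2 "3 / \<delta>"] by auto
  then have k: "3 < 2 ^ k * \<delta>"
    using \<open>0 < \<delta>\<close> by (simp add: pos_divide_less_eq)
  define M where "M = K ^ k"
  have "M > 0"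
    using dm unfolding M_def doubling_mms_def by simp
  then have "\<forall>\<^sub>F r in at_right 0. \<mu> (ball x r - C) < ennreal (1 / M) * \<mu> (ball x r)"
    using dens unfolding density_point_def by simp
  then obtain b where "b > 0" and b: "\<And>r. 0 < r \<Longrightarrow> r < b \<Longrightarrow> \<mu> (ball x r - C) < ennreal (1 / M) * \<mu> (ball x r)"
    unfolding eventually_at_right_field by auto
  show ?thesis
  proof (intro exI[of _ "b / 2"] conjI allI impI)
    fix y assume y: "0 < dist y x \<and> dist y x < b / 2"
    define r where "r = dist y x"
    have "\<mu> (ball x (2 * r)) \<le> ennreal M * \<mu> (ball y (\<delta> * r))"
      unfolding M_def r_def using \<open>0 < \<delta>\<close> y k by (intro doubling_mms_ball_le_small_ball[OF dm]) auto
    have "\<mu> (ball x (2 * r) - C) < ennreal (1 / M) * \<mu> (ball x (2 * r))"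
      using b y unfolding r_def by simp
    also have "\<dots> \<le> ennreal (1 / M) * (ennreal M * \<mu> (ball y (\<delta> * r)))"
      by (intro mult_left_mono \<open>\<mu> (ball x (2 * r)) \<le> _\<close>) simp
    also have "\<dots> = \<mu> (ball y (\<delta> * r))"
      using \<open>M > 0\<close> by (simp add: mult.assoc[symmetric] ennreal_mult''[symmetric])
    finally have less: "\<mu> (ball x (2 * r) - C) < \<mu> (ball y (\<delta> * r))" .
    show "\<exists>z\<in>C. dist y z < \<delta> * r"
    proof (rule ccontr)
      assume "\<not> (\<exists>z\<in>C. dist y z < \<delta> * r)"
      moreover have "\<delta> * r \<le> r"
        using \<open>0 < \<delta>\<close> \<open>\<delta> \<le> 1\<close> y unfolding r_def by (simp add: mult_left_le_one_le)
      then have "dist x z < 2 * r" if "dist y z < \<delta> * r" for z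
        using dist_triangle[of x z y] dist_commute[of x y] that unfolding r_def by linarith
      ultimately have "ball y (\<delta> * r) \<subseteq> ball x (2 * r) - C"
        by auto
      then show False
        using less outer_measure_mono[OF doubling_mms_outer_measure[OF dm]] by (simp add: leD)
    qed
  qed (use \<open>b > 0\<close> in simp)
qed

lemma lipschitz_quotient_lower_bound:
  assumes L: "L-lipschitz_on B f" and "y \<in> B" "z \<in> B" "f z \<ge> 0" "y \<noteq> x"
    and "0 \<le> \<delta>" "\<delta> < 1" and yz: "dist y z \<le> \<delta> * dist y x"
  shows "(f y / dist y x - L * \<delta>) / (1 + \<delta>) \<le> f z / dist z x"
proof -
  define r where "r = dist y x"
  have "r > 0"
    using \<open>y \<noteq> x\<close> unfolding r_def by simp
  have upper: "dist z x \<le> (1 + \<delta>) * r"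
    using dist_triangle[of z x y] yz unfolding r_def by (simp add: dist_commute algebra_simps)
  have "(1 - \<delta>) * r \<le> dist z x"
    using dist_triangle[of y x z] yz unfolding r_def by (simp add: dist_commute algebra_simps)
  then have "dist z x > 0"
    using \<open>r > 0\<close> \<open>\<delta> < 1\<close> mult_pos_pos[of "1 - \<delta>" r] by linarith
  have "f y - f z \<le> L * dist y z"
    using lipschitz_onD[OF L \<open>y \<in> B\<close> \<open>z \<in> B\<close>] by (simp add: dist_real_def)
  moreover have "L * dist y z \<le> L * (\<delta> * r)"
    using yz lipschitz_on_nonneg[OF L] unfolding r_def by (rule mult_left_mono)
  ultimately have fz: "f y - L * (\<delta> * r) \<le> f z"
    by linarith
  have "(f y / r - L * \<delta>) / (1 + \<delta>) = (f y - L * (\<delta> * r)) / ((1 + \<delta>) * r)"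
    using \<open>r > 0\<close> \<open>0 \<le> \<delta>\<close> by (simp add: field_simps)
  also have "\<dots> \<le> f z / dist z x"
  proof (cases "f y - L * (\<delta> * r) \<le> 0")
    case True
    then have "(f y - L * (\<delta> * r)) / ((1 + \<delta>) * r) \<le> 0"
      using \<open>r > 0\<close> \<open>0 \<le> \<delta>\<close> by (simp add: divide_nonpos_pos)
    also have "0 \<le> f z / dist z x"
      using \<open>f z \<ge> 0\<close> by simp
    finally show ?thesis .
  next
    case False
    then show ?thesis
      using fz upper \<open>dist z x > 0\<close> by (intro frac_le) auto
  qed
  finally show ?thesis
    unfolding r_def .
qed

lemma mu_nbhd_ball:
  assumes "\<mu> {} = 0" "d > 0"
  shows "mu_nbhd \<mu> x (ball x d)"
proof -
  have "\<mu> (ball x r - ball x d) = 0" if "r < d" for r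
  proof -
    have "ball x r - ball x d = {}"
      using that by auto
    then show ?thesis
      using assms(1) by metis
  qed
  then have "\<forall>\<^sub>F r in at_right 0. enn2real (\<mu> (ball x r - ball x d) / \<mu> (ball x r)) = 0"
    unfolding eventually_at_right_field using assms by (intro exI[of _ d]) auto
  then have "((\<lambda>r. enn2real (\<mu> (ball x r - ball x d) / \<mu> (ball x r))) \<longlongrightarrow> 0) (at_right 0)"
    by (rule tendsto_eventually)
  then show ?thesis
    unfolding mu_nbhd_def using \<open>d > 0\<close> by auto
qed

lemma mu_limsup_le_Limsup:
  assumes "\<mu> {} = 0"
  shows "mu_limsup \<mu> x B g \<le> Limsup (at x within B) (\<lambda>y. ereal (g y))"
  unfolding Limsup_def
proof (rule INF_greatest)
  fix P assume "P \<in> {P. eventually P (at x within B)}"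
  then obtain d where "d > 0" and d: "\<forall>y\<in>B. y \<noteq> x \<and> dist y x < d \<longrightarrow> P y"
    by (auto simp: eventually_at)
  have "mu_limsup \<mu> x B g \<le> (SUP y \<in> ball x d \<inter> B - {x}. ereal (g y))"
    unfolding mu_limsup_def using mu_nbhd_ball[of \<mu> d x] assms \<open>d > 0\<close> by (intro INF_lower) simp
  also have "\<dots> \<le> (SUP y\<in>{y. P y}. ereal (g y))"
    using d by (intro SUP_subset_mono) (auto simp: dist_commute)
  finally show "mu_limsup \<mu> x B g \<le> (SUP y\<in>{y. P y}. ereal (g y))" .
qed

lemma Limsup_quotient_le_SUP_density_point:
  assumes dm: "doubling_mms K \<mu>" and C: "density_point \<mu> x C" "C \<subseteq> B"
    and nonneg: "\<forall>y\<in>B. f y \<ge> 0" and L: "L-lipschitz_on B f"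
  shows "Limsup (at x within B) (\<lambda>y. ereal (f y / dist y x)) \<le> (SUP z \<in> C - {x}. ereal (f z / dist z x))"
proof -
  define g where "g y = f y / dist y x" for y
  show "Limsup (at x within B) (\<lambda>y. ereal (g y)) \<le> (SUP z \<in> C - {x}. ereal (g z))"
  proof (rule dense_le)
    fix t assume t: "t < Limsup (at x within B) (\<lambda>y. ereal (g y))"
    show "t \<le> (SUP z \<in> C - {x}. ereal (g z))"
    proof (cases t)
      case (real t')
      obtain s where "t < ereal s" and s: "ereal s < Limsup (at x within B) (\<lambda>y. ereal (g y))"
        using ereal_dense2[OF t] by blast
      have "((\<lambda>\<delta>. (s - L * \<delta>) / (1 + \<delta>)) \<longlongrightarrow> (s - L * 0) / (1 + 0)) (at_right 0)"
        by (intro tendsto_intros) auto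
      then have "\<forall>\<^sub>F \<delta> in at_right 0. t' < (s - L * \<delta>) / (1 + \<delta>)"
        using \<open>t < ereal s\<close> real by (intro order_tendstoD(1)) auto
      then obtain \<delta> where "0 < \<delta>" "\<delta> < 1" and \<delta>: "t' < (s - L * \<delta>) / (1 + \<delta>)"
        unfolding eventually_at_right_field by (metis field_lbound_gt_zero zero_less_one)
      obtain r0 where "r0 > 0"
        and r0: "\<And>y. 0 < dist y x \<Longrightarrow> dist y x < r0 \<Longrightarrow> \<exists>z\<in>C. dist y z < \<delta> * dist y x"
        using density_point_meets_small_balls[OF dm C(1) \<open>0 < \<delta>\<close>] \<open>\<delta> < 1\<close> by auto
      have "\<not> (\<forall>\<^sub>F y in at x within B. ereal (g y) \<le> ereal s)"
        using Limsup_bounded s by (metis leD)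
      then obtain y where "y \<in> B" "y \<noteq> x" "dist y x < r0" "s < g y"
        unfolding eventually_at using \<open>r0 > 0\<close> by (auto simp: not_le)
      then obtain z where "z \<in> C" and yz: "dist y z < \<delta> * dist y x"
        using r0 by auto
      have "\<delta> * dist y x < dist y x"
        using \<open>\<delta> < 1\<close> \<open>y \<noteq> x\<close> by simp
      then have "z \<noteq> x"
        using yz by auto
      note \<delta>
      also have "(s - L * \<delta>) / (1 + \<delta>) < (g y - L * \<delta>) / (1 + \<delta>)"
        using \<open>s < g y\<close> \<open>0 < \<delta>\<close> by (intro divide_strict_right_mono) auto
      also have "\<dots> \<le> g z"
        unfolding g_def using \<open>z \<in> C\<close> C(2) nonneg \<open>y \<in> B\<close> \<open>y \<noteq> x\<close> \<open>0 < \<delta>\<close> \<open>\<delta> < 1\<close> yz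
        by (intro lipschitz_quotient_lower_bound[OF L]) auto
      also have "ereal (g z) \<le> (SUP z \<in> C - {x}. ereal (g z))"
        using \<open>z \<in> C\<close> \<open>z \<noteq> x\<close> by (intro SUP_upper) auto
      finally show ?thesis
        using real by simp
    qed (use t in auto)
  qed
qed

lemma Limsup_le_mu_limsup:
  assumes dm: "doubling_mms K \<mu>" and "mu_nbhd \<mu> x B"
    and nonneg: "\<forall>y\<in>B. f y \<ge> 0" and L: "L-lipschitz_on B f"
  shows "Limsup (at x within B) (\<lambda>y. ereal (f y / dist y x)) \<le> mu_limsup \<mu> x B (\<lambda>y. f y / dist y x)"
  unfolding mu_limsup_def
proof (rule INF_greatest)
  fix U assume "U \<in> {U. mu_nbhd \<mu> x U}"
  then obtain C where "C \<subseteq> U \<inter> B" and C: "density_point \<mu> x C"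
    using mu_nbhd_obtains_density_point[OF dm] \<open>mu_nbhd \<mu> x B\<close>
      density_point_Int[OF doubling_mms_outer_measure[OF dm]] by (metis Int_mono mem_Collect_eq)
  then have "Limsup (at x within B) (\<lambda>y. ereal (f y / dist y x)) \<le> (SUP z \<in> C - {x}. ereal (f z / dist z x))"
    using nonneg by (intro Limsup_quotient_le_SUP_density_point[OF dm C _ _ L]) auto
  also have "\<dots> \<le> (SUP y \<in> U \<inter> B - {x}. ereal (f y / dist y x))"
    using \<open>C \<subseteq> U \<inter> B\<close> by (intro SUP_subset_mono) auto
  finally show "Limsup (at x within B) (\<lambda>y. ereal (f y / dist y x)) \<le> (SUP y \<in> U \<inter> B - {x}. ereal (f y / dist y x))" .
qed

theorem proposition2p4:
  fixes K :: real and \<mu> :: "'a::polish_space set \<Rightarrow> ennreal"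
    and x :: 'a and B :: "'a set" and f :: "'a \<Rightarrow> real"
  assumes "doubling_mms K \<mu>"
    and "\<mu> {x} = 0"
    and "mu_nbhd \<mu> x B"
    and "\<forall>y\<in>B. f y \<ge> 0"
    and "\<exists>L. L-lipschitz_on B f"
    and "f x = 0"
  shows "Limsup (at x within B) (\<lambda>y. ereal (f y / dist y x))
         = mu_limsup \<mu> x B (\<lambda>y. f y / dist y x)"
proof -
  obtain L where "L-lipschitz_on B f"
    using assms(5) by blast
  then have "Limsup (at x within B) (\<lambda>y. ereal (f y / dist y x)) \<le> mu_limsup \<mu> x B (\<lambda>y. f y / dist y x)"
    by (rule Limsup_le_mu_limsup[OF assms(1,3,4)])
  moreover have "\<mu> {} = 0"
    using doubling_mms_outer_measure[OF assms(1)] unfolding outer_measure_def by blast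
  ultimately show ?thesis
    using mu_limsup_le_Limsup by (metis antisym)
qed

end
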